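(* Let $\mathcal{H}_\ell,\mathcal{H}_r$ be Hilbert spaces, $\mathcal{H}_S$ a finite-dimensional Hilbert space, $H_\ell,H_S,H_r$ self-adjoint operators on $\mathcal{H}_\ell,\mathcal{H}_S,\mathcal{H}_r$, and $\chi_\ell\in\mathcal{H}_\ell$, $\chi_r\in\mathcal{H}_r$, $\delta_\ell,\delta_r\in\mathcal{H}_S$ non-zero vectors, with $(\delta_\ell,(H_S-E)^{-1}\delta_r)\not\equiv0$ and $(\chi_\ell,\chi_r,\delta_\ell,\delta_r)$ a cyclic family for $H_0=H_\ell+H_S+H_r$ on $\mathcal{H}=\mathcal{H}_\ell\oplus\mathcal{H}_S\oplus\mathcal{H}_r$. Let $H_{\lambda,\nu}=H_0+\lambda[(\chi_\ell,\cdot)\delta_\ell+(\delta_\ell,\cdot)\chi_\ell]+\nu[(\chi_r,\cdot)\delta_r+(\delta_r,\cdot)\chi_r]$. Then: (1) $C^{(0)}_{\varphi,\psi}\subset\mathcal{N}$ for $\varphi,\psi\in\{\chi_\ell,\delta_\ell\}$, $\varphi\ne\psi$; (2) for $\nu\neq0$, $$C^{(\nu)}_{\chi_\ell,\delta_\ell}\setminus\mathcal{N}=\Big\{E\in\mathbb{R}:\lim_{\epsilon\searrow0}|G_0(\chi_\ell,\chi_\ell,E+i\epsilon)|=\infty,\ \lim_{\epsilon\searrow0}G_0(\chi_r,\chi_r,E+i\epsilon)=\frac{G_0(\delta_\ell,\delta_\ell,E)}{\nu^2d(E)}\Big\};$$ (3) for $\nu\neq0$, $$C^{(\nu)}_{\delta_\ell,\chi_\ell}\setminus\mathcal{N}=\Big\{E\in\mathbb{R}:\lim_{\epsilon\searrow0}|G_0(\chi_\ell,\chi_\ell,E+i\epsilon)|=0,\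 \lim_{\epsilon\searrow0}G_0(\chi_r,\chi_r,E+i\epsilon)=\frac{1}{\nu^2G_0(\delta_r,\delta_r,E)}\Big\}.$$
   Context: $G_{\lambda,\nu}(\varphi,\psi,z)=(\varphi,(H_{\lambda,\nu}-z)^{-1}\psi)$ for $z\in\mathbb{C}\setminus\mathbb{R}$, $G_0=G_{0,0}$; for $E\in\mathbb{R}\setminus\sigma(H_S)$ and $\varphi,\psi\in\mathcal{H}_S$, $G_0(\varphi,\psi,E)=(\varphi,(H_S-E)^{-1}\psi)$. For $E\in\mathbb{R}\setminus\sigma(H_S)$, $d(E)=G_0(\delta_\ell,\delta_\ell,E)G_0(\delta_r,\delta_r,E)-G_0(\delta_\ell,\delta_r,E)G_0(\delta_r,\delta_\ell,E)$. $\mathcal{N}=\{E\in\mathbb{R}\setminus\sigma(H_S): G_0(\delta_\ell,\delta_\ell,E)G_0(\delta_r,\delta_r,E)G_0(\delta_\ell,\delta_r,E)d(E)=0\}\cup\sigma(H_S)$. For $\varphi,\psi\in\{\chi_\ell,\delta_\ell\}$, $\varphi\ne\psi$, $C^{(\nu)}_{\varphi,\psi}=\{E\in\mathbb{R}:\lim_{\epsilon\searrow0}|G_{0,\nu}(\varphi,\varphi,E+i\epsilon)|=\infty,\ \lim_{\epsilon\searrow0}G_{0,\nu}(\psi,\psi,E+i\epsilon)=0\}$. *)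

theory Defs
  imports "HOL-Analysis.Analysis"
begin

text \<open>A complex Hilbert space is modelled as a real Hilbert space (real inner product
 space that is complete) together with the action of the imaginary unit, a real-linear
 isometry J with J (J x) = - x.  The complex inner product (antilinear in the first
 argument, as in the paper) is cinner x y = (x . y) + i (J x . y).\<close>

class chilbert = real_inner + complete_space +
  fixes imult :: "'a \<Rightarrow> 'a"
  assumes imult_add: "imult (x + y) = imult x + imult y"
    and imult_scaleR: "imult (r *\<^sub>R x) = r *\<^sub>R imult x"
    and imult_imult: "imult (imult x) = - x"
    and imult_inner: "inner (imult x) (imult y) = inner x y"

instantiation prod :: (chilbert, chilbert) chilbert
begin
definition imult_prod_def: "imult p = (imult (fst p), imult (snd p))"
instance
  by standard (auto simp: imult_prod_def imult_add imult_scaleR imult_imult imult_inner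
      inner_prod_def)
end

definition cscale :: "complex \<Rightarrow> 'a::chilbert \<Rightarrow> 'a" where
  "cscale c x = Re c *\<^sub>R x + Im c *\<^sub>R imult x"

definition cinner :: "'a::chilbert \<Rightarrow> 'a \<Rightarrow> complex" where
  "cinner x y = Complex (inner x y) (inner (imult x) y)"

definition cspan :: "'a::chilbert set \<Rightarrow> 'a set" where
  "cspan S = span (S \<union> imult ` S)"

definition finite_dim :: "'a::chilbert itself \<Rightarrow> bool" where
  "finite_dim _ \<longleftrightarrow> (\<exists>B::'a set. finite B \<and> span B = UNIV)"

text \<open>An operator is given by a domain D and a map A (only its values on D matter).
 Self-adjoint: dense complex-linear domain, A complex-linear on D, and A equals its
 adjoint (symmetric, and the adjoint domain is contained in D).\<close>

definition self_adjoint_op :: "'a::chilbert set \<Rightarrow> ('a \<Rightarrow> 'a) \<Rightarrow> bool" where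
  "self_adjoint_op D A \<longleftrightarrow>
     0 \<in> D \<and> (\<forall>x\<in>D. \<forall>y\<in>D. \<forall>c. cscale c x + y \<in> D) \<and> closure D = UNIV \<and>
     (\<forall>x\<in>D. \<forall>y\<in>D. \<forall>c. A (cscale c x + y) = cscale c (A x) + A y) \<and>
     (\<forall>x\<in>D. \<forall>y\<in>D. cinner (A x) y = cinner x (A y)) \<and>
     (\<forall>y z. (\<forall>x\<in>D. cinner (A x) y = cinner x z) \<longrightarrow> y \<in> D \<and> A y = z)"

definition op_spectrum :: "'a::chilbert set \<Rightarrow> ('a \<Rightarrow> 'a) \<Rightarrow> complex set" where
  "op_spectrum D A = {z. \<not> (\<forall>\<psi>. \<exists>!u. u \<in> D \<and> A u - cscale z u = \<psi>)}"

definition real_spectrum :: "'a::chilbert set \<Rightarrow> ('a \<Rightarrow> 'a) \<Rightarrow> real set" where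
  "real_spectrum D A = {E. complex_of_real E \<in> op_spectrum D A}"

definition resolvent :: "'a::chilbert set \<Rightarrow> ('a \<Rightarrow> 'a) \<Rightarrow> complex \<Rightarrow> 'a \<Rightarrow> 'a" where
  "resolvent D A z \<psi> = (THE u. u \<in> D \<and> A u - cscale z u = \<psi>)"

definition green :: "'a::chilbert set \<Rightarrow> ('a \<Rightarrow> 'a) \<Rightarrow> 'a \<Rightarrow> 'a \<Rightarrow> complex \<Rightarrow> complex" where
  "green D A \<phi> \<psi> z = cinner \<phi> (resolvent D A z \<psi>)"

text \<open>H = H_l (+) H_S (+) H_r, realised as the product type 'l \<times> 's \<times> 'r.\<close>

definition emb_l :: "'l::chilbert \<Rightarrow> 'l \<times> 's::chilbert \<times> 'r::chilbert" where
  "emb_l x = (x, 0, 0)"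
definition emb_S :: "'s::chilbert \<Rightarrow> 'l::chilbert \<times> 's \<times> 'r::chilbert" where
  "emb_S x = (0, x, 0)"
definition emb_r :: "'r::chilbert \<Rightarrow> 'l::chilbert \<times> 's::chilbert \<times> 'r" where
  "emb_r x = (0, 0, x)"

definition dom0 :: "'l::chilbert set \<Rightarrow> 'r::chilbert set \<Rightarrow> ('l \<times> 's::chilbert \<times> 'r) set" where
  "dom0 Dl Dr = Dl \<times> UNIV \<times> Dr"

definition H0 :: "('l::chilbert \<Rightarrow> 'l) \<Rightarrow> ('s::chilbert \<Rightarrow> 's) \<Rightarrow> ('r::chilbert \<Rightarrow> 'r)
     \<Rightarrow> 'l \<times> 's \<times> 'r \<Rightarrow> 'l \<times> 's \<times> 'r" where
  "H0 Hl HS Hr p = (Hl (fst p), HS (fst (snd p)), Hr (snd (snd p)))"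

definition Hpert :: "('l::chilbert \<Rightarrow> 'l) \<Rightarrow> ('s::chilbert \<Rightarrow> 's) \<Rightarrow> ('r::chilbert \<Rightarrow> 'r)
     \<Rightarrow> 'l \<Rightarrow> 'r \<Rightarrow> 's \<Rightarrow> 's \<Rightarrow> real \<Rightarrow> real \<Rightarrow> 'l \<times> 's \<times> 'r \<Rightarrow> 'l \<times> 's \<times> 'r" where
  "Hpert Hl HS Hr chil chir dell delr lam nu p =
     H0 Hl HS Hr p
     + lam *\<^sub>R (cscale (cinner (emb_l chil) p) (emb_S dell) + cscale (cinner (emb_S dell) p) (emb_l chil))
     + nu *\<^sub>R (cscale (cinner (emb_r chir) p) (emb_S delr) + cscale (cinner (emb_S delr) p) (emb_r chir))"

definition cyclic_family :: "'a::chilbert set \<Rightarrow> ('a \<Rightarrow> 'a) \<Rightarrow> 'a set \<Rightarrow> bool" where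
  "cyclic_family D A F \<longleftrightarrow>
     closure (cspan {resolvent D A z v | z v. Im z \<noteq> 0 \<and> v \<in> F}) = UNIV"

text \<open>d(E) and the exceptional set N (G_0 restricted to H_S is the resolvent of H_S).\<close>
definition dfun :: "('s::chilbert \<Rightarrow> 's) \<Rightarrow> 's \<Rightarrow> 's \<Rightarrow> real \<Rightarrow> complex" where
  "dfun HS dell delr E =
     green UNIV HS dell dell (of_real E) * green UNIV HS delr delr (of_real E)
     - green UNIV HS dell delr (of_real E) * green UNIV HS delr dell (of_real E)"

definition Nset :: "('s::chilbert \<Rightarrow> 's) \<Rightarrow> 's \<Rightarrow> 's \<Rightarrow> real set" where
  "Nset HS dell delr =
     {E. E \<notin> real_spectrum UNIV HS \<and>
         green UNIV HS dell dell (of_real E) * green UNIV HS delr delr (of_real E)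
         * green UNIV HS dell delr (of_real E) * dfun HS dell delr E = 0}
     \<union> real_spectrum UNIV HS"

definition Cset :: "('a::chilbert \<Rightarrow> 'a) \<Rightarrow> 'a set \<Rightarrow> 'a \<Rightarrow> 'a \<Rightarrow> real set" where
  "Cset A D \<phi> \<psi> = {E.
     filterlim (\<lambda>\<epsilon>. cmod (green D A \<phi> \<phi> (Complex E \<epsilon>))) at_top (at_right 0) \<and>
     ((\<lambda>\<epsilon>. green D A \<psi> \<psi> (Complex E \<epsilon>)) \<longlongrightarrow> 0) (at_right 0)}"

end

theory Submission
  imports Defs
begin

text \<open>Since the left coupling is off, H(0,nu) leaves chil alone: G(0,nu)(chil,chil) is the Green
  function of Hl for every nu, G(0,nu)(chir,chir) at nu = 0 is that of Hr, and at nu = 0 also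
  G(0,0)(dell,dell) is that of HS, which is continuous up to real E outside the spectrum of HS
  because HS is finite-dimensional; this gives (1). For nu \<noteq> 0, solving the resolvent equation
  for dell exhibits G(0,nu)(dell,dell) as the image of F = G(0,0)(chir,chir) under the Moebius map
  w \<mapsto> (GS(dell,dell) - nu^2 d w) / (1 - nu^2 GS(delr,delr) w), whose coefficients converge as
  \<epsilon> \<searrow> 0. Off N the limiting map is nondegenerate, so G(0,nu)(dell,dell) tends to 0 or to
  infinity exactly when F tends to its zero GS(dell,dell) / (nu^2 d) or to its pole
  1 / (nu^2 GS(delr,delr)); this gives (2) and (3).\<close>

section \<open>Complex structure on a real Hilbert space\<close>

lemma imult_linear: "linear (imult :: 'a::chilbert \<Rightarrow> 'a)"
  by (rule linearI) (simp_all add: imult_add imult_scaleR)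

lemma imult_zero [simp]: "imult 0 = (0::'a::chilbert)"
  using linear_0[OF imult_linear] .

lemma norm_imult [simp]: "norm (imult x) = norm (x::'a::chilbert)"
  by (simp add: norm_eq_sqrt_inner imult_inner)

lemma bounded_linear_imult: "bounded_linear (imult :: 'a::chilbert \<Rightarrow> 'a)"
  by (rule bounded_linear_intro[where K=1]) (simp_all add: imult_add imult_scaleR)

lemma imult_diff: "imult (x - y) = imult x - imult (y::'a::chilbert)"
  using linear_diff[OF imult_linear] .

lemma inner_imult_left: "inner (imult x) y = - inner x (imult (y::'a::chilbert))"
  using imult_inner[of "imult x" y] by (simp add: imult_imult)

lemma inner_imult_right: "inner x (imult y) = - inner (imult x) (y::'a::chilbert)"
  by (simp add: inner_imult_left)

lemma inner_imult_self [simp]: "inner (imult x) x = (0::real)" for x :: "'a::chilbert"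
  using inner_imult_left[of x x] by (simp add: inner_commute)

lemma cscale_add_left: "cscale (a + b) x = cscale a x + cscale b x"
  by (simp add: cscale_def algebra_simps)

lemma cscale_add_right: "cscale c (x + y) = cscale c x + cscale c y"
  by (simp add: cscale_def algebra_simps imult_add)

lemma cscale_diff_right: "cscale c (x - y) = cscale c x - cscale c y"
  by (simp add: cscale_def algebra_simps imult_diff)

lemma cscale_minus_left: "cscale (- a) x = - cscale a x"
  by (simp add: cscale_def algebra_simps)

lemma cscale_mult: "cscale a (cscale b x) = cscale (a * b) x"
  by (simp add: cscale_def algebra_simps imult_add imult_scaleR imult_imult)

lemma cscale_one [simp]: "cscale 1 x = x"
  by (simp add: cscale_def)

lemma cscale_zero_left [simp]: "cscale 0 x = 0"
  by (simp add: cscale_def)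

lemma cscale_zero_right [simp]: "cscale c 0 = 0"
  by (simp add: cscale_def)

lemma cscale_of_real [simp]: "cscale (of_real r) x = r *\<^sub>R x"
  by (simp add: cscale_def)

lemma cscale_scaleR: "cscale c (r *\<^sub>R x) = r *\<^sub>R cscale c x"
  by (simp add: cscale_def imult_scaleR algebra_simps)

lemma scaleR_cscale: "r *\<^sub>R cscale c x = cscale (of_real r * c) x"
  by (simp add: cscale_def scaleR_add_right)

lemma cscale_ii: "cscale \<i> x = imult x"
  by (simp add: cscale_def)

lemma norm_cscale: "norm (cscale c x) = cmod c * norm x"
proof -
  have "inner (cscale c x) (cscale c x) = ((Re c)\<^sup>2 + (Im c)\<^sup>2) * inner x x"
    by (simp add: cscale_def inner_add_left inner_add_right imult_inner
        inner_commute[of x "imult x"] algebra_simps power2_eq_square)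
  also have "\<dots> = (cmod c)\<^sup>2 * inner x x" by (simp add: cmod_power2)
  finally have "inner (cscale c x) (cscale c x) = (cmod c)\<^sup>2 * inner x x" .
  thus ?thesis by (simp add: norm_eq_sqrt_inner real_sqrt_mult)
qed

lemma tendsto_cscale:
  "(f \<longlongrightarrow> l) F \<Longrightarrow> ((\<lambda>n. cscale c (f n)) \<longlongrightarrow> cscale c l) F"
  unfolding cscale_def by (intro tendsto_intros bounded_linear.tendsto[OF bounded_linear_imult])

lemma cinner_commute: "cinner y x = cnj (cinner x y)"
  using inner_imult_left[of y x] by (simp add: cinner_def complex_eq_iff inner_commute)

lemma cinner_add_left: "cinner (x + y) z = cinner x z + cinner y z"
  by (simp add: cinner_def complex_eq_iff inner_add_left imult_add)

lemma cinner_add_right: "cinner x (y + z) = cinner x y + cinner x z"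
  by (simp add: cinner_def complex_eq_iff inner_add_right)

lemma cinner_diff_left: "cinner (x - y) z = cinner x z - cinner y z"
  by (simp add: cinner_def complex_eq_iff inner_diff_left imult_diff)

lemma cinner_diff_right: "cinner x (y - z) = cinner x y - cinner x z"
  by (simp add: cinner_def complex_eq_iff inner_diff_right)

lemma cinner_zero_left [simp]: "cinner 0 x = 0"
  by (simp add: cinner_def complex_eq_iff)

lemma cinner_zero_right [simp]: "cinner x 0 = 0"
  by (simp add: cinner_def complex_eq_iff)

lemma cinner_cscale_right: "cinner x (cscale c y) = c * cinner x y"
  by (simp add: cinner_def complex_eq_iff cscale_def inner_add_right inner_imult_right
      imult_inner imult_imult)

lemma cinner_cscale_left: "cinner (cscale c x) y = cnj c * cinner x y"
  by (subst (1 2) cinner_commute) (simp add: cinner_cscale_right)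

lemma cinner_scaleR_left: "cinner (r *\<^sub>R x) y = of_real r * cinner x y"
  using cinner_cscale_left[of "of_real r" x y] by simp

lemma cinner_scaleR_right: "cinner x (r *\<^sub>R y) = of_real r * cinner x y"
  using cinner_cscale_right[of x "of_real r" y] by simp

lemma cinner_self: "cinner x x = of_real ((norm x)\<^sup>2)"
  by (simp add: cinner_def complex_eq_iff power2_norm_eq_inner inner_imult_left imult_inner)

lemma tendsto_cinner_right:
  "(f \<longlongrightarrow> l) F \<Longrightarrow> ((\<lambda>n. cinner a (f n)) \<longlongrightarrow> cinner a l) F"
  unfolding cinner_def by (intro tendsto_Complex tendsto_inner tendsto_const)

lemma cinner_Pair [simp]: "cinner (a, b) (c, d) = cinner a c + cinner b d"
  by (simp add: cinner_def complex_eq_iff inner_prod_def imult_prod_def)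

lemma cscale_Pair [simp]: "cscale z (a, b) = (cscale z a, cscale z b)"
  by (simp add: cscale_def imult_prod_def)

section \<open>Nearest points in complete inner product spaces\<close>

lemma parallelogram_law:
  fixes a b :: "'a::real_inner"
  shows "(norm (a - b))\<^sup>2 + (norm (a + b))\<^sup>2 = 2 * (norm a)\<^sup>2 + 2 * (norm b)\<^sup>2"
  by (simp add: power2_norm_eq_inner inner_add_left inner_add_right inner_diff_left
      inner_diff_right inner_commute[of b a])

lemma convex_near_points_close:
  fixes S :: "'a::real_inner set"
  assumes "convex S" "x \<in> S" "y \<in> S" "0 \<le> d"
    and d: "\<And>w. w \<in> S \<Longrightarrow> d \<le> norm (p - w)"
    and x: "norm (p - x) \<le> d + e" and y: "norm (p - y) \<le> d + e'"
    and e: "0 \<le> e" "e \<le> 1" "0 \<le> e'" "e' \<le> 1"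
  shows "(norm (x - y))\<^sup>2 \<le> (4 * d + 2) * (e + e')"
proof -
  have "(1/2) *\<^sub>R x + (1/2) *\<^sub>R y \<in> S"
    using assms(1-3) by (rule convexD) auto
  moreover have "(p - x) + (p - y) = 2 *\<^sub>R (p - ((1/2) *\<^sub>R x + (1/2) *\<^sub>R y))"
    by (simp add: algebra_simps scaleR_2)
  ultimately have "2 * d \<le> norm ((p - x) + (p - y))"
    using d by fastforce
  hence "(2 * d)\<^sup>2 \<le> (norm ((p - x) + (p - y)))\<^sup>2"
    using \<open>0 \<le> d\<close> by (intro power_mono) auto
  moreover have "(norm (p - x))\<^sup>2 \<le> (d + e)\<^sup>2" "(norm (p - y))\<^sup>2 \<le> (d + e')\<^sup>2"
    using x y by (auto intro: power_mono)
  moreover have "e\<^sup>2 \<le> e" "e'\<^sup>2 \<le> e'"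
    using e by (auto simp: power2_eq_square intro: mult_left_le_one_le)
  ultimately have "(norm ((p - x) - (p - y)))\<^sup>2 \<le> (4 * d + 2) * (e + e')"
    using parallelogram_law[of "p - x" "p - y"] by (simp add: power2_sum algebra_simps)
  thus ?thesis by (simp add: norm_minus_commute)
qed

lemma convex_minimizing_sequence_Cauchy:
  fixes S :: "'a::real_inner set"
  assumes "convex S" and f: "\<And>n. f n \<in> S" and "0 \<le> d"
    and d: "\<And>y. y \<in> S \<Longrightarrow> d \<le> norm (p - y)"
    and fd: "\<And>n. norm (p - f n) \<le> d + inverse (real (Suc n))"
  shows "Cauchy f"
proof (rule CauchyI)
  fix r :: real assume "0 < r"
  obtain N :: nat where "(4 * d + 2) * 2 / r\<^sup>2 < real N"
    using reals_Archimedean2 by blast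
  hence N: "(4 * d + 2) * 2 / r\<^sup>2 < real (Suc N)" by simp
  have "norm (f m - f n) < r" if "m \<ge> N" "n \<ge> N" for m n
  proof -
    have e: "inverse (real (Suc k)) \<le> inverse (real (Suc N))" if "k \<ge> N" for k
      using that by (simp add: le_imp_inverse_le)
    have "(norm (f m - f n))\<^sup>2 \<le> (4 * d + 2) * (inverse (real (Suc m)) + inverse (real (Suc n)))"
      using convex_near_points_close[OF \<open>convex S\<close> f[of m] f[of n] \<open>0 \<le> d\<close> d fd[of m] fd[of n]]
      by (simp add: inverse_le_1_iff)
    also have "\<dots> \<le> (4 * d + 2) * (2 * inverse (real (Suc N)))"
      using add_mono[OF e[OF \<open>m \<ge> N\<close>] e[OF \<open>n \<ge> N\<close>]] \<open>0 \<le> d\<close>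
      by (intro mult_left_mono) auto
    also have "\<dots> < r\<^sup>2"
      using N \<open>0 < r\<close> by (simp add: field_simps)
    finally show ?thesis
      using \<open>0 < r\<close> by (simp add: power_less_imp_less_base)
  qed
  thus "\<exists>N. \<forall>m\<ge>N. \<forall>n\<ge>N. norm (f m - f n) < r" by blast
qed

lemma closed_convex_nearest_point_exists:
  fixes S :: "'a::{real_inner,complete_space} set"
  assumes "closed S" "convex S" "S \<noteq> {}"
  obtains m where "m \<in> S" "\<And>y. y \<in> S \<Longrightarrow> dist p m \<le> dist p y"
proof -
  define d where "d = (INF y\<in>S. norm (p - y))"
  have bdd: "bdd_below ((\<lambda>y. norm (p - y)) ` S)"
    by (intro bdd_belowI2[of _ 0]) simp
  have d_le: "d \<le> norm (p - y)" if "y \<in> S" for y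
    unfolding d_def using bdd that by (rule cINF_lower)
  have "0 \<le> d"
    unfolding d_def using \<open>S \<noteq> {}\<close> by (intro cINF_greatest) auto
  have "\<exists>y\<in>S. norm (p - y) < d + inverse (real (Suc n))" for n
    unfolding d_def using \<open>S \<noteq> {}\<close> by (intro cInf_lessD[of "(\<lambda>y. norm (p - y)) ` S", simplified]) auto
  then obtain f where f: "\<And>n. f n \<in> S"
    and fd: "\<And>n. norm (p - f n) < d + inverse (real (Suc n))"
    by metis
  have "Cauchy f"
    by (rule convex_minimizing_sequence_Cauchy[OF assms(2) f \<open>0 \<le> d\<close> d_le less_imp_le[OF fd]])
  then obtain m where lim: "f \<longlonglongrightarrow> m"
    using Cauchy_convergent_iff convergent_def by blast
  have "m \<in> S"
    using \<open>closed S\<close> f lim closed_sequential_limits by blast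
  moreover have "norm (p - m) \<le> d"
  proof (rule LIMSEQ_le)
    show "(\<lambda>n. norm (p - f n)) \<longlonglongrightarrow> norm (p - m)"
      by (intro tendsto_intros lim)
    show "(\<lambda>n. d + inverse (real (Suc n))) \<longlonglongrightarrow> d"
      by (rule LIMSEQ_inverse_real_of_nat_add)
  qed (use fd less_imp_le in blast)
  ultimately show ?thesis
    using that d_le by (force simp: dist_norm)
qed

lemma closed_subspace_orthogonal_decomposition:
  fixes M :: "'a::{real_inner,complete_space} set"
  assumes "closed M" "subspace M"
  obtains m where "m \<in> M" "\<And>x. x \<in> M \<Longrightarrow> inner (p - m) x = 0"
proof -
  have "convex M" "M \<noteq> {}"
    using \<open>subspace M\<close> subspace_imp_convex subspace_0 by auto
  then obtain m where m: "m \<in> M" and near: "\<forall>y\<in>M. dist p m \<le> dist p y"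
    using closed_convex_nearest_point_exists[OF \<open>closed M\<close>] by metis
  have "inner (p - m) x = 0" if "x \<in> M" for x
  proof -
    have "m + x \<in> M" "m - x \<in> M"
      using \<open>subspace M\<close> m that by (simp_all add: subspace_add subspace_diff)
    from this[THEN any_closest_point_dot[OF \<open>convex M\<close> \<open>closed M\<close> m _ near]]
    show ?thesis by (simp add: inner_diff_right)
  qed
  with m that show ?thesis by blast
qed

section \<open>Resolvents of self-adjoint operators\<close>

locale self_adjoint =
  fixes D :: "'a::chilbert set" and A :: "'a \<Rightarrow> 'a"
  assumes self_adjoint: "self_adjoint_op D A"
begin

lemma zero_in_dom: "0 \<in> D"
  and dense_dom: "closure D = UNIV"
  and dom_cscale_add: "x \<in> D \<Longrightarrow> y \<in> D \<Longrightarrow> cscale c x + y \<in> D"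
  and op_cscale_add: "x \<in> D \<Longrightarrow> y \<in> D \<Longrightarrow> A (cscale c x + y) = cscale c (A x) + A y"
  and symmetric: "x \<in> D \<Longrightarrow> y \<in> D \<Longrightarrow> cinner (A x) y = cinner x (A y)"
  and adjoint_in_dom: "(\<And>x. x \<in> D \<Longrightarrow> cinner (A x) y = cinner x z) \<Longrightarrow> y \<in> D \<and> A y = z"
  using self_adjoint unfolding self_adjoint_op_def by blast+

lemma dom_add: "x \<in> D \<Longrightarrow> y \<in> D \<Longrightarrow> x + y \<in> D"
  using dom_cscale_add[of x y 1] by simp

lemma dom_cscale: "x \<in> D \<Longrightarrow> cscale c x \<in> D"
  using dom_cscale_add[of x 0 c] zero_in_dom by simp

lemma dom_diff: "x \<in> D \<Longrightarrow> y \<in> D \<Longrightarrow> x - y \<in> D"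
  using dom_cscale_add[of y x "-1"] by (simp add: cscale_minus_left)

lemma op_zero: "A 0 = 0"
  using op_cscale_add[OF zero_in_dom zero_in_dom, of 1] by simp

lemma op_add: "x \<in> D \<Longrightarrow> y \<in> D \<Longrightarrow> A (x + y) = A x + A y"
  using op_cscale_add[of x y 1] by simp

lemma op_cscale: "x \<in> D \<Longrightarrow> A (cscale c x) = cscale c (A x)"
  using op_cscale_add[of x 0 c] zero_in_dom op_zero by simp

lemma op_diff: "x \<in> D \<Longrightarrow> y \<in> D \<Longrightarrow> A (x - y) = A x - A y"
  using op_cscale_add[of y x "-1"] by (simp add: cscale_minus_left)

lemma Im_cinner_op_self: "u \<in> D \<Longrightarrow> Im (cinner u (A u)) = 0"
  using symmetric[of u u] cinner_commute[of u "A u"] by (metis Reals_cnj_iff complex_is_Real_iff)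

lemma norm_shifted_lower_bound:
  assumes "u \<in> D"
  shows "\<bar>Im z\<bar> * norm u \<le> norm (A u - cscale z u)"
proof -
  have "Im (cinner u (A u - cscale z u)) = - Im z * (norm u)\<^sup>2"
    using Im_cinner_op_self[OF assms] by (simp add: cinner_diff_right cinner_cscale_right cinner_self)
  moreover have "\<bar>Im (cinner u (A u - cscale z u))\<bar> \<le> norm u * norm (A u - cscale z u)"
    using Cauchy_Schwarz_ineq2[of "imult u" "A u - cscale z u"] by (simp add: cinner_def)
  ultimately have "norm u * (\<bar>Im z\<bar> * norm u) \<le> norm u * norm (A u - cscale z u)"
    by (simp add: abs_mult power2_eq_square algebra_simps)
  thus ?thesis
    by (cases "u = 0") auto
qed

lemma shifted_inj:
  assumes "Im z \<noteq> 0" "u \<in> D" "v \<in> D" "A u - cscale z u = A v - cscale z v"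
  shows "u = v"
proof -
  have "A (u - v) - cscale z (u - v) = 0"
    using assms(4) by (simp add: op_diff[OF assms(2,3)] cscale_diff_right algebra_simps)
  with norm_shifted_lower_bound[OF dom_diff[OF assms(2,3)], of z] \<open>Im z \<noteq> 0\<close>
  show ?thesis by (simp add: mult_le_0_iff)
qed

lemma subspace_shifted_range: "subspace ((\<lambda>u. A u - cscale z u) ` D)"
  unfolding subspace_def
proof (intro conjI ballI allI)
  show "0 \<in> (\<lambda>u. A u - cscale z u) ` D"
    using zero_in_dom op_zero by force
next
  fix x y assume "x \<in> (\<lambda>u. A u - cscale z u) ` D" "y \<in> (\<lambda>u. A u - cscale z u) ` D"
  then obtain u v where "u \<in> D" "v \<in> D" "x = A u - cscale z u" "y = A v - cscale z v"
    by blast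
  thus "x + y \<in> (\<lambda>u. A u - cscale z u) ` D"
    by (intro image_eqI[of _ _ "u + v"]) (auto simp: op_add dom_add cscale_add_right)
next
  fix c :: real and x assume "x \<in> (\<lambda>u. A u - cscale z u) ` D"
  then obtain u where "u \<in> D" "x = A u - cscale z u"
    by blast
  thus "c *\<^sub>R x \<in> (\<lambda>u. A u - cscale z u) ` D"
    using op_cscale[of u "of_real c"] dom_cscale[of u "of_real c"]
    by (intro image_eqI[of _ _ "c *\<^sub>R u"]) (auto simp: cscale_scaleR scaleR_diff_right)
qed

lemma imult_shifted_range:
  assumes "x \<in> (\<lambda>u. A u - cscale z u) ` D"
  shows "imult x \<in> (\<lambda>u. A u - cscale z u) ` D"
proof -
  obtain u where "u \<in> D" "x = A u - cscale z u"
    using assms by blast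
  thus ?thesis
    using op_cscale[of u \<i>] dom_cscale[of u \<i>]
    by (intro image_eqI[of _ _ "cscale \<i> u"]) (auto simp: cscale_mult mult.commute cscale_diff_right
        simp flip: cscale_ii)
qed

lemma Cauchy_shifted_preimage:
  assumes "Im z \<noteq> 0" and u: "\<And>n. u n \<in> D" and "Cauchy (\<lambda>n. A (u n) - cscale z (u n))"
  shows "Cauchy u"
proof (rule CauchyI)
  fix e :: real assume "0 < e"
  hence "0 < e * \<bar>Im z\<bar>"
    using assms by simp
  then obtain N where N: "\<forall>m\<ge>N. \<forall>n\<ge>N. norm ((A (u m) - cscale z (u m)) - (A (u n) - cscale z (u n)))
      < e * \<bar>Im z\<bar>"
    using CauchyD[OF assms(3)] by blast
  have "norm (u m - u n) < e" if "m \<ge> N" "n \<ge> N" for m n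
  proof -
    have "\<bar>Im z\<bar> * norm (u m - u n) \<le> norm ((A (u m) - cscale z (u m)) - (A (u n) - cscale z (u n)))"
      using norm_shifted_lower_bound[OF dom_diff[OF u u], of z m n]
      by (simp add: op_diff[OF u u] cscale_diff_right algebra_simps)
    also have "\<dots> < \<bar>Im z\<bar> * e"
      using N that by (simp add: mult.commute)
    finally show ?thesis
      using assms by (simp add: mult_less_cancel_left_pos)
  qed
  thus "\<exists>N. \<forall>m\<ge>N. \<forall>n\<ge>N. norm (u m - u n) < e" by blast
qed

text \<open>The limit of the preimages lies in D because A is closed, being self-adjoint.\<close>

lemma closed_shifted_range:
  assumes "Im z \<noteq> 0"
  shows "closed ((\<lambda>u. A u - cscale z u) ` D)"
  unfolding closed_sequential_limits
proof (intro allI impI, elim conjE)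
  fix x l assume "\<forall>n. x n \<in> (\<lambda>u. A u - cscale z u) ` D" and xl: "x \<longlonglongrightarrow> l"
  hence "\<forall>n. \<exists>v. v \<in> D \<and> x n = A v - cscale z v"
    by blast
  then obtain u where "\<forall>n. u n \<in> D \<and> x n = A (u n) - cscale z (u n)"
    by metis
  hence u: "\<And>n. u n \<in> D" and ux: "\<And>n. x n = A (u n) - cscale z (u n)"
    by auto
  have "x = (\<lambda>n. A (u n) - cscale z (u n))"
    using ux by (intro ext)
  hence "Cauchy u"
    using Cauchy_shifted_preimage[OF assms u] LIMSEQ_imp_Cauchy[OF xl] by simp
  then obtain v where uv: "u \<longlonglongrightarrow> v"
    using Cauchy_convergent_iff convergent_def by blast
  have Au: "(\<lambda>n. A (u n)) \<longlonglongrightarrow> l + cscale z v"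
    using tendsto_add[OF xl tendsto_cscale[OF uv, of z]] by (simp add: ux)
  have "v \<in> D \<and> A v = l + cscale z v"
  proof (rule adjoint_in_dom)
    fix y assume "y \<in> D"
    have "(\<lambda>n. cinner (A y) (u n)) \<longlonglongrightarrow> cinner (A y) v"
      by (rule tendsto_cinner_right[OF uv])
    moreover have "(\<lambda>n. cinner (A y) (u n)) \<longlonglongrightarrow> cinner y (l + cscale z v)"
      using tendsto_cinner_right[OF Au] by (simp add: symmetric[OF \<open>y \<in> D\<close> u])
    ultimately show "cinner (A y) v = cinner y (l + cscale z v)"
      by (rule LIMSEQ_unique)
  qed
  thus "l \<in> (\<lambda>u. A u - cscale z u) ` D" by force
qed

lemma shifted_surj:
  assumes "Im z \<noteq> 0"
  shows "\<exists>u\<in>D. A u - cscale z u = \<psi>"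
proof -
  let ?M = "(\<lambda>u. A u - cscale z u) ` D"
  obtain m where "m \<in> ?M" and orth: "\<And>x. x \<in> ?M \<Longrightarrow> inner (\<psi> - m) x = 0"
    using closed_subspace_orthogonal_decomposition[OF closed_shifted_range[OF assms]
        subspace_shifted_range] by blast
  have "cinner x (\<psi> - m) = 0" if "x \<in> ?M" for x
    using orth[OF that] orth[OF imult_shifted_range[OF that]]
    by (simp add: cinner_def complex_eq_iff inner_commute)
  hence "cinner (A x - cscale z x) (\<psi> - m) = 0" if "x \<in> D" for x
    using that by blast
  hence "\<psi> - m \<in> D \<and> A (\<psi> - m) = cscale (cnj z) (\<psi> - m)"
    by (intro adjoint_in_dom) (simp add: cinner_diff_left cinner_cscale_left cinner_cscale_right)
  hence "\<bar>Im (cnj z)\<bar> * norm (\<psi> - m) \<le> 0"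
    using norm_shifted_lower_bound[of "\<psi> - m" "cnj z"] by simp
  hence "\<psi> = m"
    using assms by (simp add: mult_le_0_iff)
  with \<open>m \<in> ?M\<close> show ?thesis by blast
qed

lemma shifted_bij: "Im z \<noteq> 0 \<Longrightarrow> \<exists>!u. u \<in> D \<and> A u - cscale z u = \<psi>"
  using shifted_surj shifted_inj by blast

lemma nonreal_not_in_spectrum: "Im z \<noteq> 0 \<Longrightarrow> z \<notin> op_spectrum D A"
  unfolding op_spectrum_def using shifted_bij by blast

lemma shifted_bij_off_spectrum:
  "z \<notin> op_spectrum D A \<Longrightarrow> \<exists>!u. u \<in> D \<and> A u - cscale z u = \<psi>"
  unfolding op_spectrum_def by blast

lemma resolvent_in_dom: "z \<notin> op_spectrum D A \<Longrightarrow> resolvent D A z \<psi> \<in> D"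
  and resolvent_solves:
    "z \<notin> op_spectrum D A \<Longrightarrow> A (resolvent D A z \<psi>) - cscale z (resolvent D A z \<psi>) = \<psi>"
  using theI'[OF shifted_bij_off_spectrum] unfolding resolvent_def by blast+

lemma resolvent_unique:
  "z \<notin> op_spectrum D A \<Longrightarrow> u \<in> D \<Longrightarrow> A u - cscale z u = \<psi> \<Longrightarrow> resolvent D A z \<psi> = u"
  unfolding resolvent_def by (rule the1_equality[OF shifted_bij_off_spectrum]) auto

lemma shifted_cscale_add:
  "u \<in> D \<Longrightarrow> v \<in> D \<Longrightarrow>
    A (cscale c u + v) - cscale z (cscale c u + v) = cscale c (A u - cscale z u) + (A v - cscale z v)"
  by (simp add: op_cscale_add cscale_add_right cscale_diff_right cscale_mult mult.commute)

lemma resolvent_cscale_add: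
  assumes "z \<notin> op_spectrum D A"
  shows "resolvent D A z (cscale c x + y) = cscale c (resolvent D A z x) + resolvent D A z y"
  using resolvent_in_dom[OF assms] resolvent_solves[OF assms]
  by (intro resolvent_unique[OF assms]) (simp_all add: dom_cscale_add shifted_cscale_add)

lemma Im_green_self_pos:
  assumes "0 < Im z" "\<phi> \<noteq> 0"
  shows "0 < Im (green D A \<phi> \<phi> z)"
proof -
  define u where "u = resolvent D A z \<phi>"
  have "z \<notin> op_spectrum D A"
    using assms(1) nonreal_not_in_spectrum by simp
  hence "u \<in> D" and u: "A u - cscale z u = \<phi>"
    using resolvent_in_dom resolvent_solves unfolding u_def by auto
  have "u \<noteq> 0"
    using u \<open>\<phi> \<noteq> 0\<close> op_zero by auto
  have "green D A \<phi> \<phi> z = cinner (A u - cscale z u) u"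
    unfolding green_def u_def[symmetric] u ..
  hence "Im (green D A \<phi> \<phi> z) = Im (cinner (A u) u) + Im z * (norm u)\<^sup>2"
    by (simp add: cinner_diff_left cinner_cscale_left cinner_self)
  also have "Im (cinner (A u) u) = 0"
    using Im_cinner_op_self[OF \<open>u \<in> D\<close>] cinner_commute[of "A u" u] by simp
  finally show ?thesis
    using assms(1) \<open>u \<noteq> 0\<close> by simp
qed

lemma green_real_cnj:
  assumes "of_real E \<notin> op_spectrum D A"
  shows "green D A \<phi> \<psi> (of_real E) = cnj (green D A \<psi> \<phi> (of_real E))"
proof -
  define a b where "a = resolvent D A (of_real E) \<psi>" and "b = resolvent D A (of_real E) \<phi>"
  have a: "a \<in> D" "A a - E *\<^sub>R a = \<psi>" and b: "b \<in> D" "A b - E *\<^sub>R b = \<phi>"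
    using resolvent_in_dom[OF assms] resolvent_solves[OF assms] by (auto simp: a_def b_def)
  have "green D A \<phi> \<psi> (of_real E) = cinner (A b - E *\<^sub>R b) a"
    by (simp add: green_def a_def b)
  also have "\<dots> = cinner b (A a - E *\<^sub>R a)"
    by (simp add: cinner_diff_left cinner_diff_right cinner_scaleR_left cinner_scaleR_right
        symmetric[OF b(1) a(1)])
  also have "\<dots> = cnj (green D A \<psi> \<phi> (of_real E))"
    unfolding a(2) green_def b_def by (rule cinner_commute)
  finally show ?thesis .
qed

end

section \<open>Self-adjointness of the model Hamiltonians\<close>

lemma self_adjoint_op_add_symmetric:
  assumes "self_adjoint_op D A"
    and lin: "\<And>x y c. V (cscale c x + y) = cscale c (V x) + V y"
    and sym: "\<And>x y. cinner (V x) y = cinner x (V y)"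
  shows "self_adjoint_op D (\<lambda>x. A x + V x)"
proof -
  interpret self_adjoint D A by (rule self_adjoint.intro) fact
  show ?thesis unfolding self_adjoint_op_def
  proof (intro conjI ballI allI impI)
    fix x y c assume "x \<in> D" "y \<in> D"
    thus "A (cscale c x + y) + V (cscale c x + y) = cscale c (A x + V x) + (A y + V y)"
      by (simp only: op_cscale_add lin cscale_add_right) (simp add: algebra_simps)
    show "cinner (A x + V x) y = cinner x (A y + V y)"
      using \<open>x \<in> D\<close> \<open>y \<in> D\<close> by (simp add: symmetric sym cinner_add_left cinner_add_right)
  next
    fix y z assume h: "\<forall>x\<in>D. cinner (A x + V x) y = cinner x z"
    have "y \<in> D \<and> A y = z - V y"
      by (rule adjoint_in_dom) (use h in \<open>simp add: cinner_add_left cinner_diff_right sym eq_diff_eq\<close>)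
    thus "y \<in> D" "A y + V y = z" by auto
  qed (use zero_in_dom dense_dom dom_cscale_add in auto)
qed

definition sym_rank_two :: "'a::chilbert \<Rightarrow> 'a \<Rightarrow> 'a \<Rightarrow> 'a" where
  "sym_rank_two a b p = cscale (cinner a p) b + cscale (cinner b p) a"

lemma sym_rank_two_cscale_add:
  "sym_rank_two a b (cscale c x + y) = cscale c (sym_rank_two a b x) + sym_rank_two a b y"
  by (simp add: sym_rank_two_def cinner_add_right cinner_cscale_right cscale_add_left
      cscale_add_right cscale_mult algebra_simps)

lemma sym_rank_two_symmetric: "cinner (sym_rank_two a b x) y = cinner x (sym_rank_two a b y)"
  by (simp add: sym_rank_two_def cinner_add_left cinner_add_right cinner_cscale_left
      cinner_cscale_right algebra_simps cinner_commute[of a] cinner_commute[of b])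

lemma Hpert_eq_H0_add:
  "Hpert Hl HS Hr chil chir dell delr lam nu = (\<lambda>p. H0 Hl HS Hr p +
     (lam *\<^sub>R sym_rank_two (emb_l chil) (emb_S dell) p + nu *\<^sub>R sym_rank_two (emb_r chir) (emb_S delr) p))"
  by (rule ext) (simp add: Hpert_def sym_rank_two_def algebra_simps)

lemma Hpert_zero_left_coupling:
  "Hpert Hl HS Hr chil chir dell delr 0 nu (a, b, c) =
     (Hl a, HS b + cscale (of_real nu * cinner chir c) delr, Hr c + cscale (of_real nu * cinner delr b) chir)"
  by (simp add: Hpert_def H0_def emb_l_def emb_r_def emb_S_def scaleR_cscale)

locale model =
  L: self_adjoint Dl Hl + S: self_adjoint "UNIV :: 's set" HS + R: self_adjoint Dr Hr
  for Dl :: "'l::chilbert set" and Hl and HS :: "'s::chilbert \<Rightarrow> 's"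
    and Dr :: "'r::chilbert set" and Hr
begin

lemma H0_adjoint_in_dom:
  fixes y z :: "'l \<times> 's \<times> 'r"
  assumes h: "\<And>x. x \<in> dom0 Dl Dr \<Longrightarrow> cinner (H0 Hl HS Hr x) y = cinner x z"
  shows "y \<in> dom0 Dl Dr \<and> H0 Hl HS Hr y = z"
proof -
  obtain y1 y2 y3 z1 z2 z3 where y: "y = (y1, y2, y3)" and z: "z = (z1, z2, z3)"
    by (cases y, cases z) auto
  have "y1 \<in> Dl \<and> Hl y1 = z1"
  proof (rule L.adjoint_in_dom)
    fix a assume "a \<in> Dl"
    with h[of "(a, 0, 0)"] show "cinner (Hl a) y1 = cinner a z1"
      by (simp add: dom0_def H0_def y z S.op_zero R.op_zero R.zero_in_dom)
  qed
  moreover have "HS y2 = z2"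
  proof -
    have "cinner (HS a) y2 = cinner a z2" for a
      using h[of "(0, a, 0)"] by (simp add: dom0_def H0_def y z L.op_zero R.op_zero L.zero_in_dom R.zero_in_dom)
    thus ?thesis using S.adjoint_in_dom by blast
  qed
  moreover have "y3 \<in> Dr \<and> Hr y3 = z3"
  proof (rule R.adjoint_in_dom)
    fix a assume "a \<in> Dr"
    with h[of "(0, 0, a)"] show "cinner (Hr a) y3 = cinner a z3"
      by (simp add: dom0_def H0_def y z S.op_zero L.op_zero L.zero_in_dom)
  qed
  ultimately show ?thesis
    by (simp add: y z dom0_def H0_def)
qed

lemma self_adjoint_H0: "self_adjoint_op (dom0 Dl Dr) (H0 Hl HS Hr :: 'l \<times> 's \<times> 'r \<Rightarrow> _)"
  unfolding self_adjoint_op_def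
proof (intro conjI ballI allI impI)
  show "0 \<in> dom0 Dl Dr"
    using L.zero_in_dom R.zero_in_dom by (simp add: dom0_def zero_prod_def)
  show "closure (dom0 Dl Dr :: ('l \<times> 's \<times> 'r) set) = UNIV"
    using L.dense_dom R.dense_dom by (simp add: dom0_def closure_Times)
next
  fix x y :: "'l \<times> 's \<times> 'r" and c assume "x \<in> dom0 Dl Dr" "y \<in> dom0 Dl Dr"
  thus "cscale c x + y \<in> dom0 Dl Dr"
    and "H0 Hl HS Hr (cscale c x + y) = cscale c (H0 Hl HS Hr x) + H0 Hl HS Hr y"
    and "cinner (H0 Hl HS Hr x) y = cinner x (H0 Hl HS Hr y)"
    by (auto simp: dom0_def H0_def L.dom_cscale_add R.dom_cscale_add L.op_cscale_add
        S.op_cscale_add R.op_cscale_add L.symmetric S.symmetric R.symmetric)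
qed (use H0_adjoint_in_dom in blast)+

lemma self_adjoint_Hpert:
  "self_adjoint_op (dom0 Dl Dr) (Hpert Hl HS Hr chil chir dell delr lam nu :: 'l \<times> 's \<times> 'r \<Rightarrow> _)"
  unfolding Hpert_eq_H0_add
proof (rule self_adjoint_op_add_symmetric[OF self_adjoint_H0])
  fix x y :: "'l \<times> 's \<times> 'r" and c
  show "lam *\<^sub>R sym_rank_two (emb_l chil) (emb_S dell) (cscale c x + y)
      + nu *\<^sub>R sym_rank_two (emb_r chir) (emb_S delr) (cscale c x + y)
    = cscale c (lam *\<^sub>R sym_rank_two (emb_l chil) (emb_S dell) x
      + nu *\<^sub>R sym_rank_two (emb_r chir) (emb_S delr) x)
      + (lam *\<^sub>R sym_rank_two (emb_l chil) (emb_S dell) y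
      + nu *\<^sub>R sym_rank_two (emb_r chir) (emb_S delr) y)"
    by (simp only: sym_rank_two_cscale_add cscale_add_right cscale_scaleR scaleR_add_right)
      (simp add: algebra_simps)
qed (simp add: sym_rank_two_symmetric cinner_add_left cinner_add_right cinner_scaleR_left
    cinner_scaleR_right)

end

section \<open>Resolvents in finite dimension\<close>

lemma orthogonal_expansion:
  fixes C :: "'a::real_inner set"
  assumes "finite C" "pairwise orthogonal C" "x \<in> span C"
  shows "x = (\<Sum>c\<in>C. (inner x c / inner c c) *\<^sub>R c)"
proof -
  define r where "r = x - (\<Sum>c\<in>C. (inner x c / inner c c) *\<^sub>R c)"
  have "orthogonal r c" if "c \<in> C" for c
  proof -
    have "inner (\<Sum>c'\<in>C. (inner x c' / inner c' c') *\<^sub>R c') c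
        = (\<Sum>c'\<in>C. (inner x c' / inner c' c') * inner c' c)"
      by (simp add: inner_sum_left)
    also have "\<dots> = (inner x c / inner c c) * inner c c
        + (\<Sum>c'\<in>C - {c}. (inner x c' / inner c' c') * inner c' c)"
      by (rule sum.remove[OF assms(1) that])
    also have "(\<Sum>c'\<in>C - {c}. (inner x c' / inner c' c') * inner c' c) = 0"
      using assms(2) that by (intro sum.neutral) (auto simp: pairwise_def orthogonal_def)
    finally show ?thesis
      by (cases "c = 0") (simp_all add: r_def orthogonal_def inner_diff_left)
  qed
  moreover have "r \<in> span C"
    unfolding r_def by (intro span_diff assms(3) span_sum span_scale span_base)
  ultimately have "orthogonal r r"
    by (rule orthogonal_to_span[rotated])
  thus ?thesis by (simp add: r_def orthogonal_self)
qed

lemma abs_inner_div_inner_le: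
  fixes x c :: "'a::real_inner"
  shows "\<bar>inner x c / inner c c\<bar> \<le> norm x / norm c"
proof (cases "c = 0")
  case False
  have "\<bar>inner x c / inner c c\<bar> = \<bar>inner x c\<bar> / (norm c)\<^sup>2"
    by (simp add: power2_norm_eq_inner)
  also have "\<dots> \<le> norm x * norm c / (norm c)\<^sup>2"
    by (rule divide_right_mono[OF Cauchy_Schwarz_ineq2]) simp
  also have "\<dots> = norm x / norm c"
    using False by (simp add: power2_eq_square)
  finally show ?thesis .
qed simp

lemma finite_span_linear_bounded:
  fixes f :: "'a::real_inner \<Rightarrow> 'b::real_normed_vector" and B :: "'a set"
  assumes "finite B" "span B = UNIV" "linear f"
  obtains K where "0 \<le> K" "\<And>x. norm (f x) \<le> K * norm x"
proof -
  obtain C where "finite C" "span C = span B" "pairwise orthogonal C"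
    using basis_orthogonal[OF assms(1)] by blast
  hence C: "finite C" "span C = UNIV" "pairwise orthogonal C"
    using assms(2) by simp_all
  define K where "K = (\<Sum>c\<in>C. norm (f c) / norm c)"
  have "norm (f x) \<le> K * norm x" for x
  proof -
    have "f x = (\<Sum>c\<in>C. (inner x c / inner c c) *\<^sub>R f c)"
      by (subst orthogonal_expansion[OF C(1,3), of x])
        (simp_all add: C(2) linear_sum[OF assms(3)] linear_scale[OF assms(3)])
    also have "norm \<dots> \<le> (\<Sum>c\<in>C. norm x * (norm (f c) / norm c))"
    proof (intro order.trans[OF norm_sum] sum_mono)
      fix c
      have "\<bar>inner x c / inner c c\<bar> * norm (f c) \<le> norm x / norm c * norm (f c)"
        by (rule mult_right_mono[OF abs_inner_div_inner_le]) simp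
      thus "norm ((inner x c / inner c c) *\<^sub>R f c) \<le> norm x * (norm (f c) / norm c)"
        by simp
    qed
    also have "\<dots> = K * norm x"
      by (simp add: K_def sum_distrib_left mult.commute)
    finally show ?thesis .
  qed
  moreover have "0 \<le> K"
    unfolding K_def by (intro sum_nonneg) simp
  ultimately show ?thesis using that by blast
qed

context self_adjoint
begin

lemma linear_resolvent:
  assumes "z \<notin> op_spectrum D A"
  shows "linear (resolvent D A z)"
  using resolvent_cscale_add[OF assms, of 1] resolvent_cscale_add[OF assms, of "of_real r" _ 0 for r]
    resolvent_cscale_add[OF assms, of 1 0 0]
  by (intro linearI) simp_all

lemma resolvent_bounded:
  assumes "finite_dim TYPE('a)" "z \<notin> op_spectrum D A"
  obtains K where "0 \<le> K" "\<And>\<psi>. norm (resolvent D A z \<psi>) \<le> K * norm \<psi>"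
  using assms(1) finite_span_linear_bounded[OF _ _ linear_resolvent[OF assms(2)]]
  unfolding finite_dim_def by blast

text \<open>w = R(E + i\<epsilon>)\<psi> - R(E)\<psi> solves (A - E) w = i\<epsilon> (w + R(E)\<psi>), so w = O(\<epsilon>) once R(E) is
  bounded.\<close>

lemma norm_resolvent_near_real_diff:
  assumes E: "of_real E \<notin> op_spectrum D A"
    and "0 \<le> K" and K: "\<And>v. norm (resolvent D A (of_real E) v) \<le> K * norm v"
    and "0 < \<epsilon>" "2 * K * \<epsilon> \<le> 1"
  shows "norm (resolvent D A (Complex E \<epsilon>) \<psi> - resolvent D A (of_real E) \<psi>)
    \<le> 2 * K * \<epsilon> * norm (resolvent D A (of_real E) \<psi>)"
proof -
  have z: "Complex E \<epsilon> \<notin> op_spectrum D A"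
    using \<open>0 < \<epsilon>\<close> nonreal_not_in_spectrum by simp
  define a b where "a = resolvent D A (of_real E) \<psi>" and "b = resolvent D A (Complex E \<epsilon>) \<psi>"
  have ab: "a \<in> D" "b \<in> D" "A a - E *\<^sub>R a = \<psi>" "A b - cscale (Complex E \<epsilon>) b = \<psi>"
    using resolvent_in_dom[OF E] resolvent_solves[OF E, of \<psi>] resolvent_in_dom[OF z]
      resolvent_solves[OF z, of \<psi>] by (simp_all add: a_def b_def)
  have "Complex E \<epsilon> = of_real E + \<i> * of_real \<epsilon>"
    by (simp add: complex_eq_iff)
  hence shift: "A (b - a) - E *\<^sub>R (b - a) = cscale (\<i> * of_real \<epsilon>) (b - a) + cscale (\<i> * of_real \<epsilon>) a"
    using ab by (simp add: op_diff cscale_add_left cscale_diff_right algebra_simps)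
  have "resolvent D A (of_real E) (A (b - a) - E *\<^sub>R (b - a)) = b - a"
    using ab by (intro resolvent_unique[OF E]) (auto simp: dom_diff)
  hence "norm (b - a) \<le> K * norm (A (b - a) - E *\<^sub>R (b - a))"
    using K[of "A (b - a) - E *\<^sub>R (b - a)"] by simp
  also have "\<dots> = K * norm (cscale (\<i> * of_real \<epsilon>) (b - a) + cscale (\<i> * of_real \<epsilon>) a)"
    by (simp only: shift)
  also have "\<dots> \<le> K * (\<epsilon> * norm (b - a) + \<epsilon> * norm a)"
    using norm_triangle_ineq[of "cscale (\<i> * of_real \<epsilon>) (b - a)" "cscale (\<i> * of_real \<epsilon>) a"]
      \<open>0 < \<epsilon>\<close> \<open>0 \<le> K\<close>
    by (intro mult_left_mono) (auto simp: norm_cscale norm_mult)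
  finally have "norm (b - a) * (1 - K * \<epsilon>) \<le> K * \<epsilon> * norm a"
    by (simp add: algebra_simps)
  moreover have "1/2 \<le> 1 - K * \<epsilon>"
    using \<open>2 * K * \<epsilon> \<le> 1\<close> by simp
  ultimately have "norm (b - a) * (1/2) \<le> K * \<epsilon> * norm a"
    by (meson mult_left_mono norm_ge_zero order_trans)
  thus ?thesis by (simp add: a_def b_def)
qed

lemma green_tendsto_real:
  assumes "finite_dim TYPE('a)" and E: "of_real E \<notin> op_spectrum D A"
  shows "((\<lambda>\<epsilon>. green D A \<phi> \<psi> (Complex E \<epsilon>)) \<longlongrightarrow> green D A \<phi> \<psi> (of_real E)) (at_right 0)"
proof -
  obtain K where "0 \<le> K" and K: "\<And>v. norm (resolvent D A (of_real E) v) \<le> K * norm v"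
    using resolvent_bounded[OF assms] by blast
  let ?a = "resolvent D A (of_real E) \<psi>"
  have "((\<lambda>\<epsilon>. resolvent D A (Complex E \<epsilon>) \<psi> - ?a) \<longlongrightarrow> 0) (at_right 0)"
  proof (rule Lim_null_comparison)
    show "\<forall>\<^sub>F \<epsilon> in at_right 0. norm (resolvent D A (Complex E \<epsilon>) \<psi> - ?a) \<le> 2 * K * norm ?a * \<epsilon>"
    proof -
      have "\<forall>\<^sub>F \<epsilon> in at_right 0. 0 < \<epsilon> \<and> 2 * K * \<epsilon> \<le> 1"
        unfolding eventually_at_right_field using \<open>0 \<le> K\<close>
        by (intro exI[of _ "1 / (2 * K + 1)"]) (auto simp: field_simps)
      thus ?thesis
        by eventually_elim
          (use norm_resolvent_near_real_diff[OF E \<open>0 \<le> K\<close> K] in \<open>simp add: mult_ac\<close>)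
    qed
    show "((\<lambda>\<epsilon>. 2 * K * norm ?a * \<epsilon>) \<longlongrightarrow> 0) (at_right 0)"
      by (auto intro!: tendsto_eq_intros)
  qed
  hence "((\<lambda>\<epsilon>. resolvent D A (Complex E \<epsilon>) \<psi>) \<longlongrightarrow> ?a) (at_right 0)"
    by (rule LIM_zero_cancel)
  thus ?thesis
    unfolding green_def by (rule tendsto_cinner_right)
qed

end

section \<open>Boundary values of a Moebius transformation\<close>

text \<open>Throughout, \<gamma> is the image of F under the Moebius map w \<mapsto> (a - q d w) / (1 - q b w),
  whose coefficients converge; d0 \<noteq> a0 b0 says that the limiting map is nondegenerate,
  with zero a0 / (q d0) and pole 1 / (q b0).\<close>

lemma moebius_tendsto_zero_iff:
  fixes \<gamma> F a b d :: "real \<Rightarrow> complex" and q a0 b0 d0 :: complex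
  assumes ev: "\<forall>\<^sub>F \<epsilon> in at_right 0. 1 - q * b \<epsilon> * F \<epsilon> \<noteq> 0 \<and> \<gamma> \<epsilon> * (1 - q * b \<epsilon> * F \<epsilon>) = a \<epsilon> - q * F \<epsilon> * d \<epsilon>"
    and a: "(a \<longlongrightarrow> a0) (at_right 0)" and b: "(b \<longlongrightarrow> b0) (at_right 0)"
    and d: "(d \<longlongrightarrow> d0) (at_right 0)"
    and "q \<noteq> 0" "d0 \<noteq> 0" "d0 \<noteq> a0 * b0"
  shows "(\<gamma> \<longlongrightarrow> 0) (at_right 0) \<longleftrightarrow> (F \<longlongrightarrow> a0 / (q * d0)) (at_right 0)"
proof
  assume \<gamma>: "(\<gamma> \<longlongrightarrow> 0) (at_right 0)"
  have "((\<lambda>\<epsilon>. d \<epsilon> - b \<epsilon> * \<gamma> \<epsilon>) \<longlongrightarrow> d0 - b0 * 0) (at_right 0)"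
    by (intro tendsto_intros d b \<gamma>)
  hence "\<forall>\<^sub>F \<epsilon> in at_right 0. d \<epsilon> - b \<epsilon> * \<gamma> \<epsilon> \<noteq> 0"
    using \<open>d0 \<noteq> 0\<close> by (intro tendsto_imp_eventually_ne) auto
  with ev have "\<forall>\<^sub>F \<epsilon> in at_right 0. (a \<epsilon> - \<gamma> \<epsilon>) / (q * (d \<epsilon> - b \<epsilon> * \<gamma> \<epsilon>)) = F \<epsilon>"
  proof eventually_elim
    case (elim \<epsilon>)
    hence "F \<epsilon> * (q * (d \<epsilon> - b \<epsilon> * \<gamma> \<epsilon>)) = a \<epsilon> - \<gamma> \<epsilon>"
      by (auto simp: algebra_simps)
    thus ?case using elim \<open>q \<noteq> 0\<close> by (simp add: divide_eq_eq)
  qed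
  moreover have "((\<lambda>\<epsilon>. (a \<epsilon> - \<gamma> \<epsilon>) / (q * (d \<epsilon> - b \<epsilon> * \<gamma> \<epsilon>))) \<longlongrightarrow> (a0 - 0) / (q * (d0 - b0 * 0)))
      (at_right 0)"
    using \<open>q \<noteq> 0\<close> \<open>d0 \<noteq> 0\<close> by (intro tendsto_intros a \<gamma> d b) auto
  ultimately show "(F \<longlongrightarrow> a0 / (q * d0)) (at_right 0)"
    by (simp add: tendsto_cong)
next
  assume F: "(F \<longlongrightarrow> a0 / (q * d0)) (at_right 0)"
  have "\<forall>\<^sub>F \<epsilon> in at_right 0. (a \<epsilon> - q * F \<epsilon> * d \<epsilon>) / (1 - q * b \<epsilon> * F \<epsilon>) = \<gamma> \<epsilon>"
    using ev by eventually_elim (simp add: divide_eq_eq)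
  moreover have "1 - q * b0 * (a0 / (q * d0)) \<noteq> 0"
    using \<open>q \<noteq> 0\<close> \<open>d0 \<noteq> 0\<close> \<open>d0 \<noteq> a0 * b0\<close> by (simp add: field_simps)
  hence "((\<lambda>\<epsilon>. (a \<epsilon> - q * F \<epsilon> * d \<epsilon>) / (1 - q * b \<epsilon> * F \<epsilon>)) \<longlongrightarrow>
      (a0 - q * (a0 / (q * d0)) * d0) / (1 - q * b0 * (a0 / (q * d0)))) (at_right 0)"
    by (intro tendsto_intros a F d b)
  ultimately show "(\<gamma> \<longlongrightarrow> 0) (at_right 0)"
    using \<open>q \<noteq> 0\<close> \<open>d0 \<noteq> 0\<close> by (simp add: tendsto_cong)
qed

lemma moebius_tendsto_infinity_at_pole:
  fixes \<gamma> F a b d :: "real \<Rightarrow> complex" and q a0 b0 d0 :: complex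
  assumes ev: "\<forall>\<^sub>F \<epsilon> in at_right 0. 1 - q * b \<epsilon> * F \<epsilon> \<noteq> 0 \<and> \<gamma> \<epsilon> * (1 - q * b \<epsilon> * F \<epsilon>) = a \<epsilon> - q * F \<epsilon> * d \<epsilon>"
    and a: "(a \<longlongrightarrow> a0) (at_right 0)" and b: "(b \<longlongrightarrow> b0) (at_right 0)"
    and d: "(d \<longlongrightarrow> d0) (at_right 0)"
    and "q \<noteq> 0" "b0 \<noteq> 0" "d0 \<noteq> a0 * b0"
    and F: "(F \<longlongrightarrow> 1 / (q * b0)) (at_right 0)"
  shows "filterlim (\<lambda>\<epsilon>. cmod (\<gamma> \<epsilon>)) at_top (at_right 0)"
proof -
  have "\<forall>\<^sub>F \<epsilon> in at_right 0. cmod (a \<epsilon> - q * F \<epsilon> * d \<epsilon>) / cmod (1 - q * b \<epsilon> * F \<epsilon>) = cmod (\<gamma> \<epsilon>)"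
    using ev by eventually_elim (simp add: divide_eq_eq flip: norm_mult)
  moreover have "filterlim (\<lambda>\<epsilon>. cmod (a \<epsilon> - q * F \<epsilon> * d \<epsilon>) / cmod (1 - q * b \<epsilon> * F \<epsilon>)) at_top (at_right 0)"
  proof (rule LIM_at_top_divide)
    show "((\<lambda>\<epsilon>. cmod (a \<epsilon> - q * F \<epsilon> * d \<epsilon>)) \<longlongrightarrow> cmod (a0 - q * (1 / (q * b0)) * d0)) (at_right 0)"
      by (intro tendsto_intros a F d)
    have "a0 - q * (1 / (q * b0)) * d0 = (a0 * b0 - d0) / b0"
      using \<open>q \<noteq> 0\<close> \<open>b0 \<noteq> 0\<close> by (simp add: field_simps)
    thus "0 < cmod (a0 - q * (1 / (q * b0)) * d0)"
      using \<open>b0 \<noteq> 0\<close> \<open>d0 \<noteq> a0 * b0\<close> by simp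
    have "((\<lambda>\<epsilon>. 1 - q * b \<epsilon> * F \<epsilon>) \<longlongrightarrow> 1 - q * b0 * (1 / (q * b0))) (at_right 0)"
      by (intro tendsto_intros b F)
    thus "((\<lambda>\<epsilon>. cmod (1 - q * b \<epsilon> * F \<epsilon>)) \<longlongrightarrow> 0) (at_right 0)"
      using \<open>q \<noteq> 0\<close> \<open>b0 \<noteq> 0\<close> by (simp add: tendsto_norm_zero_iff)
    show "\<forall>\<^sub>F \<epsilon> in at_right 0. 0 < cmod (1 - q * b \<epsilon> * F \<epsilon>)"
      using ev by eventually_elim simp
  qed
  ultimately show ?thesis
    using filterlim_cong[OF refl refl] by fastforce
qed

lemma moebius_tendsto_infinity_iff:
  fixes \<gamma> F a b d :: "real \<Rightarrow> complex" and q a0 b0 d0 :: complex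
  assumes ev: "\<forall>\<^sub>F \<epsilon> in at_right 0. 1 - q * b \<epsilon> * F \<epsilon> \<noteq> 0 \<and> \<gamma> \<epsilon> * (1 - q * b \<epsilon> * F \<epsilon>) = a \<epsilon> - q * F \<epsilon> * d \<epsilon>"
    and a: "(a \<longlongrightarrow> a0) (at_right 0)" and b: "(b \<longlongrightarrow> b0) (at_right 0)"
    and d: "(d \<longlongrightarrow> d0) (at_right 0)"
    and "q \<noteq> 0" "b0 \<noteq> 0" "d0 \<noteq> a0 * b0"
  shows "filterlim (\<lambda>\<epsilon>. cmod (\<gamma> \<epsilon>)) at_top (at_right 0) \<longleftrightarrow> (F \<longlongrightarrow> 1 / (q * b0)) (at_right 0)"
proof
  assume "filterlim (\<lambda>\<epsilon>. cmod (\<gamma> \<epsilon>)) at_top (at_right 0)"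
  hence "((\<lambda>\<epsilon>. norm (inverse (\<gamma> \<epsilon>))) \<longlongrightarrow> 0) (at_right 0)"
    unfolding norm_inverse by (rule tendsto_inverse_0_at_top)
  hence inv\<gamma>: "((\<lambda>\<epsilon>. inverse (\<gamma> \<epsilon>)) \<longlongrightarrow> 0) (at_right 0)"
    by (rule tendsto_norm_zero_cancel)
  have "\<forall>\<^sub>F \<epsilon> in at_right 0. 1 \<le> cmod (\<gamma> \<epsilon>)"
    using \<open>filterlim _ at_top _\<close> unfolding filterlim_at_top by blast
  hence "\<forall>\<^sub>F \<epsilon> in at_right 0. \<gamma> \<epsilon> \<noteq> 0"
    by eventually_elim auto
  moreover have "((\<lambda>\<epsilon>. d \<epsilon> * inverse (\<gamma> \<epsilon>) - b \<epsilon>) \<longlongrightarrow> d0 * 0 - b0) (at_right 0)"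
    by (intro tendsto_intros d b inv\<gamma>)
  hence "\<forall>\<^sub>F \<epsilon> in at_right 0. d \<epsilon> * inverse (\<gamma> \<epsilon>) - b \<epsilon> \<noteq> 0"
    by (rule tendsto_imp_eventually_ne) (use \<open>b0 \<noteq> 0\<close> in simp)
  ultimately have "\<forall>\<^sub>F \<epsilon> in at_right 0.
      (a \<epsilon> * inverse (\<gamma> \<epsilon>) - 1) / (q * (d \<epsilon> * inverse (\<gamma> \<epsilon>) - b \<epsilon>)) = F \<epsilon>"
    using ev
  proof eventually_elim
    case (elim \<epsilon>)
    hence "a \<epsilon> = \<gamma> \<epsilon> * (1 - q * b \<epsilon> * F \<epsilon>) + q * F \<epsilon> * d \<epsilon>"
      by simp
    hence "F \<epsilon> * (q * (d \<epsilon> * inverse (\<gamma> \<epsilon>) - b \<epsilon>)) = a \<epsilon> * inverse (\<gamma> \<epsilon>) - 1"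
      using \<open>\<gamma> \<epsilon> \<noteq> 0\<close> by (simp add: field_simps)
    thus ?case using elim(2) \<open>q \<noteq> 0\<close> by (simp add: divide_eq_eq)
  qed
  moreover have "((\<lambda>\<epsilon>. (a \<epsilon> * inverse (\<gamma> \<epsilon>) - 1) / (q * (d \<epsilon> * inverse (\<gamma> \<epsilon>) - b \<epsilon>)))
      \<longlongrightarrow> (a0 * 0 - 1) / (q * (d0 * 0 - b0))) (at_right 0)"
    using \<open>q \<noteq> 0\<close> \<open>b0 \<noteq> 0\<close> by (intro tendsto_intros a inv\<gamma> d b) auto
  ultimately show "(F \<longlongrightarrow> 1 / (q * b0)) (at_right 0)"
    by (simp add: tendsto_cong)
qed (rule moebius_tendsto_infinity_at_pole[OF assms])

section \<open>Green functions of the partially coupled Hamiltonian\<close>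

lemma upper_half_plane_one_minus_mult_ne_zero:
  fixes s f :: complex
  assumes "0 < Im s" "0 < Im f" "0 \<le> r"
  shows "1 - of_real r * s * f \<noteq> 0"
proof
  assume "1 - of_real r * s * f = 0"
  hence "of_real r * f * s = 1"
    by (simp add: algebra_simps)
  hence "s = inverse (of_real r * f)"
    by (metis inverse_unique)
  hence "Im s = - (r * Im f) / ((Re (of_real r * f))\<^sup>2 + (Im (of_real r * f))\<^sup>2)"
    by (simp only: inverse_complex.sel(2)) simp
  moreover have "- (r * Im f) / ((Re (of_real r * f))\<^sup>2 + (Im (of_real r * f))\<^sup>2) \<le> 0"
    using assms by (intro divide_nonpos_nonneg) simp_all
  ultimately show False
    using assms(1) by simp
qed

locale coupled_model = model Dl Hl HS Dr Hr
  for Dl :: "'l::chilbert set" and Hl and HS :: "'s::chilbert \<Rightarrow> 's"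
    and Dr :: "'r::chilbert set" and Hr +
  fixes chil :: 'l and chir :: 'r and dell delr :: 's
begin

abbreviation G :: "real \<Rightarrow> 'l \<times> 's \<times> 'r \<Rightarrow> 'l \<times> 's \<times> 'r \<Rightarrow> complex \<Rightarrow> complex" where
  "G nu \<equiv> green (dom0 Dl Dr) (Hpert Hl HS Hr chil chir dell delr 0 nu)"

abbreviation GS :: "'s \<Rightarrow> 's \<Rightarrow> complex \<Rightarrow> complex" where
  "GS \<equiv> green UNIV HS"

abbreviation Gr :: "complex \<Rightarrow> complex" where
  "Gr \<equiv> green Dr Hr chir chir"

sublocale H: self_adjoint "dom0 Dl Dr" "Hpert Hl HS Hr chil chir dell delr 0 nu"
  by (rule self_adjoint.intro[OF self_adjoint_Hpert])

lemma green_chil: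
  assumes "Im z \<noteq> 0"
  shows "G nu (emb_l chil) (emb_l chil) z = green Dl Hl chil chil z"
proof -
  note z = L.nonreal_not_in_spectrum[OF assms]
  have "resolvent (dom0 Dl Dr) (Hpert Hl HS Hr chil chir dell delr 0 nu) z (emb_l chil)
      = emb_l (resolvent Dl Hl z chil)"
    using L.resolvent_in_dom[OF z] L.resolvent_solves[OF z] R.zero_in_dom
    by (intro H.resolvent_unique[OF H.nonreal_not_in_spectrum[OF assms]])
      (auto simp: emb_l_def dom0_def Hpert_zero_left_coupling S.op_zero R.op_zero zero_prod_def)
  thus ?thesis by (simp add: green_def emb_l_def)
qed

lemma green_chir_uncoupled:
  assumes "Im z \<noteq> 0"
  shows "G 0 (emb_r chir) (emb_r chir) z = Gr z"
proof -
  note z = R.nonreal_not_in_spectrum[OF assms]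
  have "resolvent (dom0 Dl Dr) (Hpert Hl HS Hr chil chir dell delr 0 0) z (emb_r chir)
      = emb_r (resolvent Dr Hr z chir)"
    using R.resolvent_in_dom[OF z] R.resolvent_solves[OF z] L.zero_in_dom
    by (intro H.resolvent_unique[OF H.nonreal_not_in_spectrum[OF assms]])
      (auto simp: emb_r_def dom0_def Hpert_zero_left_coupling S.op_zero L.op_zero zero_prod_def)
  thus ?thesis by (simp add: green_def emb_r_def)
qed

text \<open>Writing (u1, u2, u3) for the resolvent applied to dell, the equations for u2 and u3 are
  coupled only through the scalars \<alpha> = (chir, u3) and \<beta> = (delr, u2).\<close>

lemma green_dell_linear_system:
  assumes "Im z \<noteq> 0"
  obtains \<alpha> \<beta> where "\<alpha> = - of_real nu * \<beta> * Gr z"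
    and "\<beta> = GS delr dell z - of_real nu * \<alpha> * GS delr delr z"
    and "G nu (emb_S dell) (emb_S dell) z = GS dell dell z - of_real nu * \<alpha> * GS dell delr z"
proof -
  note zS = S.nonreal_not_in_spectrum[OF assms] and zR = R.nonreal_not_in_spectrum[OF assms]
  obtain u1 u2 u3 where u: "resolvent (dom0 Dl Dr) (Hpert Hl HS Hr chil chir dell delr 0 nu) z
      (emb_S dell) = (u1, u2, u3)"
    by (metis prod_cases3)
  note zH = H.nonreal_not_in_spectrum[OF assms, of nu]
  have "u3 \<in> Dr"
    using H.resolvent_in_dom[OF zH, of "emb_S dell", unfolded u] by (simp add: dom0_def)
  define \<alpha> \<beta> where "\<alpha> = cinner chir u3" and "\<beta> = cinner delr u2"
  have eqs: "HS u2 - cscale z u2 = dell - cscale (of_real nu * \<alpha>) delr"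
    "Hr u3 - cscale z u3 = - cscale (of_real nu * \<beta>) chir"
    using H.resolvent_solves[OF zH, of "emb_S dell", unfolded u]
    by (simp_all add: u emb_S_def Hpert_zero_left_coupling \<alpha>_def \<beta>_def algebra_simps
        eq_neg_iff_add_eq_0)
  have "u2 = resolvent UNIV HS z (cscale (- (of_real nu * \<alpha>)) delr + dell)"
    using eqs(1) by (intro S.resolvent_unique[OF zS, symmetric]) (simp_all add: cscale_minus_left)
  hence u2: "u2 = resolvent UNIV HS z dell - cscale (of_real nu * \<alpha>) (resolvent UNIV HS z delr)"
    by (simp only: S.resolvent_cscale_add[OF zS]) (simp add: cscale_minus_left)
  have "u3 = resolvent Dr Hr z (cscale (- (of_real nu * \<beta>)) chir + 0)"
    using eqs(2) \<open>u3 \<in> Dr\<close> by (intro R.resolvent_unique[OF zR, symmetric]) (simp_all add: cscale_minus_left)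
  moreover have "resolvent Dr Hr z 0 = 0"
    using R.zero_in_dom R.op_zero by (intro R.resolvent_unique[OF zR]) simp_all
  ultimately have u3: "u3 = - cscale (of_real nu * \<beta>) (resolvent Dr Hr z chir)"
    by (simp only: R.resolvent_cscale_add[OF zR]) (simp add: cscale_minus_left)
  have "\<alpha> = - of_real nu * \<beta> * Gr z"
    by (simp add: \<alpha>_def u3 green_def cinner_cscale_right flip: cscale_minus_left)
  moreover have "\<beta> = GS delr dell z - of_real nu * \<alpha> * GS delr delr z"
    by (simp add: \<beta>_def u2 green_def cinner_diff_right cinner_cscale_right)
  moreover have "G nu (emb_S dell) (emb_S dell) z = GS dell dell z - of_real nu * \<alpha> * GS dell delr z"
    unfolding green_def u by (simp add: emb_S_def u2 cinner_diff_right cinner_cscale_right)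
  ultimately show ?thesis using that by blast
qed

lemma green_dell_uncoupled:
  assumes "Im z \<noteq> 0"
  shows "G 0 (emb_S dell) (emb_S dell) z = GS dell dell z"
  using green_dell_linear_system[OF assms, of 0] by auto

lemma green_dell:
  assumes "0 < Im z" "chir \<noteq> 0" "delr \<noteq> 0"
  shows "1 - of_real (nu\<^sup>2) * GS delr delr z * Gr z \<noteq> 0"
    and "G nu (emb_S dell) (emb_S dell) z * (1 - of_real (nu\<^sup>2) * GS delr delr z * Gr z)
      = GS dell dell z - of_real (nu\<^sup>2) * Gr z *
          (GS dell dell z * GS delr delr z - GS dell delr z * GS delr dell z)"
proof -
  show "1 - of_real (nu\<^sup>2) * GS delr delr z * Gr z \<noteq> 0"
    using S.Im_green_self_pos[OF assms(1,3)] R.Im_green_self_pos[OF assms(1,2)]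
    by (rule upper_half_plane_one_minus_mult_ne_zero) simp
  obtain \<alpha> \<beta> where "\<alpha> = - of_real nu * \<beta> * Gr z"
    and "\<beta> = GS delr dell z - of_real nu * \<alpha> * GS delr delr z"
    and "G nu (emb_S dell) (emb_S dell) z = GS dell dell z - of_real nu * \<alpha> * GS dell delr z"
    using green_dell_linear_system[of z nu] assms(1) by auto
  thus "G nu (emb_S dell) (emb_S dell) z * (1 - of_real (nu\<^sup>2) * GS delr delr z * Gr z)
      = GS dell dell z - of_real (nu\<^sup>2) * Gr z *
          (GS dell dell z * GS delr delr z - GS dell delr z * GS delr dell z)"
    by (simp only: of_real_power) algebra
qed

end

context coupled_model
begin

lemma not_in_Nset:
  assumes "E \<notin> Nset HS dell delr"
  shows "of_real E \<notin> op_spectrum UNIV HS" "GS dell dell (of_real E) \<noteq> 0" "GS delr delr (of_real E) \<noteq> 0"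
    "dfun HS dell delr E \<noteq> 0" "dfun HS dell delr E \<noteq> GS dell dell (of_real E) * GS delr delr (of_real E)"
proof -
  show E: "of_real E \<notin> op_spectrum UNIV HS"
    and "GS dell dell (of_real E) \<noteq> 0" "GS delr delr (of_real E) \<noteq> 0" "dfun HS dell delr E \<noteq> 0"
    using assms by (auto simp: Nset_def real_spectrum_def)
  have lr: "GS dell delr (of_real E) \<noteq> 0"
    using assms by (auto simp: Nset_def real_spectrum_def)
  have "dfun HS dell delr E - GS dell dell (of_real E) * GS delr delr (of_real E)
      = - (GS dell delr (of_real E) * cnj (GS dell delr (of_real E)))"
    by (simp add: dfun_def S.green_real_cnj[OF E, of delr dell])
  thus "dfun HS dell delr E \<noteq> GS dell dell (of_real E) * GS delr delr (of_real E)"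
    using lr by auto
qed

lemma Cset_uncoupled_chil_dell_subset:
  assumes "finite_dim TYPE('s)"
  shows "Cset (Hpert Hl HS Hr chil chir dell delr 0 0) (dom0 Dl Dr) (emb_l chil) (emb_S dell)
    \<subseteq> Nset HS dell delr"
proof
  fix E assume "E \<in> Cset (Hpert Hl HS Hr chil chir dell delr 0 0) (dom0 Dl Dr) (emb_l chil) (emb_S dell)"
  hence "((\<lambda>\<epsilon>. G 0 (emb_S dell) (emb_S dell) (Complex E \<epsilon>)) \<longlongrightarrow> 0) (at_right 0)"
    by (simp add: Cset_def)
  moreover have "\<forall>\<^sub>F \<epsilon> in at_right 0. G 0 (emb_S dell) (emb_S dell) (Complex E \<epsilon>) = GS dell dell (Complex E \<epsilon>)"
    using eventually_at_right_less by eventually_elim (simp add: green_dell_uncoupled)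
  ultimately have lim: "((\<lambda>\<epsilon>. GS dell dell (Complex E \<epsilon>)) \<longlongrightarrow> 0) (at_right 0)"
    by (simp add: tendsto_cong)
  show "E \<in> Nset HS dell delr"
  proof (rule ccontr)
    assume "E \<notin> Nset HS dell delr"
    note N = not_in_Nset[OF this]
    from S.green_tendsto_real[OF assms N(1)] lim have "GS dell dell (of_real E) = 0"
      by (rule tendsto_unique[OF trivial_limit_at_right_real])
    with N(2) show False ..
  qed
qed

lemma Cset_uncoupled_dell_chil_subset:
  assumes "finite_dim TYPE('s)"
  shows "Cset (Hpert Hl HS Hr chil chir dell delr 0 0) (dom0 Dl Dr) (emb_S dell) (emb_l chil)
    \<subseteq> Nset HS dell delr"
proof
  fix E assume "E \<in> Cset (Hpert Hl HS Hr chil chir dell delr 0 0) (dom0 Dl Dr) (emb_S dell) (emb_l chil)"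
  hence "filterlim (\<lambda>\<epsilon>. cmod (G 0 (emb_S dell) (emb_S dell) (Complex E \<epsilon>))) at_top (at_right 0)"
    by (simp add: Cset_def)
  moreover have "\<forall>\<^sub>F \<epsilon> in at_right 0.
      cmod (G 0 (emb_S dell) (emb_S dell) (Complex E \<epsilon>)) = cmod (GS dell dell (Complex E \<epsilon>))"
    using eventually_at_right_less by eventually_elim (simp add: green_dell_uncoupled)
  ultimately have lim: "filterlim (\<lambda>\<epsilon>. cmod (GS dell dell (Complex E \<epsilon>))) at_top (at_right 0)"
    using filterlim_cong[OF refl refl] by fastforce
  show "E \<in> Nset HS dell delr"
  proof (rule ccontr)
    assume "E \<notin> Nset HS dell delr"
    have "((\<lambda>\<epsilon>. cmod (GS dell dell (Complex E \<epsilon>))) \<longlongrightarrow> cmod (GS dell dell (of_real E))) (at_right 0)"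
      by (intro tendsto_norm S.green_tendsto_real assms not_in_Nset(1)[OF \<open>E \<notin> _\<close>])
    with lim show False
      using not_tendsto_and_filterlim_at_infinity[OF trivial_limit_at_right_real]
        filterlim_at_top_imp_at_infinity by blast
  qed
qed

lemma eventually_green_dell:
  assumes "chir \<noteq> 0" "delr \<noteq> 0"
  shows "\<forall>\<^sub>F \<epsilon> in at_right 0. 1 - of_real (nu\<^sup>2) * GS delr delr (Complex E \<epsilon>) * Gr (Complex E \<epsilon>) \<noteq> 0 \<and>
    G nu (emb_S dell) (emb_S dell) (Complex E \<epsilon>) *
      (1 - of_real (nu\<^sup>2) * GS delr delr (Complex E \<epsilon>) * Gr (Complex E \<epsilon>))
    = GS dell dell (Complex E \<epsilon>) - of_real (nu\<^sup>2) * Gr (Complex E \<epsilon>) *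
      (GS dell dell (Complex E \<epsilon>) * GS delr delr (Complex E \<epsilon>)
        - GS dell delr (Complex E \<epsilon>) * GS delr dell (Complex E \<epsilon>))"
  using eventually_at_right_less by eventually_elim (intro conjI green_dell; simp add: assms)

lemma green_chil_coupling_invariant:
  "\<forall>\<^sub>F \<epsilon> in at_right 0. G nu (emb_l chil) (emb_l chil) (Complex E \<epsilon>) = G 0 (emb_l chil) (emb_l chil) (Complex E \<epsilon>)"
  using eventually_at_right_less by eventually_elim (simp add: green_chil)

lemma green_chir_uncoupled_tendsto_iff:
  "((\<lambda>\<epsilon>. G 0 (emb_r chir) (emb_r chir) (Complex E \<epsilon>)) \<longlongrightarrow> L) (at_right 0)
    \<longleftrightarrow> ((\<lambda>\<epsilon>. Gr (Complex E \<epsilon>)) \<longlongrightarrow> L) (at_right 0)"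
  by (rule tendsto_cong) (use eventually_at_right_less in \<open>eventually_elim, simp add: green_chir_uncoupled\<close>)

lemma green_S_det_tendsto:
  assumes "finite_dim TYPE('s)" "of_real E \<notin> op_spectrum UNIV HS"
  shows "((\<lambda>\<epsilon>. GS dell dell (Complex E \<epsilon>) * GS delr delr (Complex E \<epsilon>)
      - GS dell delr (Complex E \<epsilon>) * GS delr dell (Complex E \<epsilon>)) \<longlongrightarrow> dfun HS dell delr E) (at_right 0)"
  unfolding dfun_def by (intro tendsto_intros S.green_tendsto_real assms)

lemma Cset_chil_dell_iff:
  assumes "finite_dim TYPE('s)" "chir \<noteq> 0" "delr \<noteq> 0" "nu \<noteq> 0" "E \<notin> Nset HS dell delr"
  shows "E \<in> Cset (Hpert Hl HS Hr chil chir dell delr 0 nu) (dom0 Dl Dr) (emb_l chil) (emb_S dell) \<longleftrightarrow>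
    filterlim (\<lambda>\<epsilon>. cmod (G 0 (emb_l chil) (emb_l chil) (Complex E \<epsilon>))) at_top (at_right 0) \<and>
    ((\<lambda>\<epsilon>. G 0 (emb_r chir) (emb_r chir) (Complex E \<epsilon>)) \<longlongrightarrow>
      GS dell dell (of_real E) / (of_real (nu\<^sup>2) * dfun HS dell delr E)) (at_right 0)"
proof -
  note N = not_in_Nset[OF assms(5)]
  note S_lim = S.green_tendsto_real[OF assms(1) N(1)]
  have "((\<lambda>\<epsilon>. G nu (emb_S dell) (emb_S dell) (Complex E \<epsilon>)) \<longlongrightarrow> 0) (at_right 0) \<longleftrightarrow>
      ((\<lambda>\<epsilon>. Gr (Complex E \<epsilon>)) \<longlongrightarrow> GS dell dell (of_real E) / (of_real (nu\<^sup>2) * dfun HS dell delr E))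
        (at_right 0)"
    by (rule moebius_tendsto_zero_iff[OF eventually_green_dell[OF assms(2,3)] S_lim S_lim
          green_S_det_tendsto[OF assms(1) N(1)]])
      (use assms(4) N in simp_all)
  moreover have "filterlim (\<lambda>\<epsilon>. cmod (G nu (emb_l chil) (emb_l chil) (Complex E \<epsilon>))) at_top (at_right 0)
      \<longleftrightarrow> filterlim (\<lambda>\<epsilon>. cmod (G 0 (emb_l chil) (emb_l chil) (Complex E \<epsilon>))) at_top (at_right 0)"
    using green_chil_coupling_invariant[of nu E]
    by (intro filterlim_cong) (auto elim: eventually_mono)
  ultimately show ?thesis
    by (simp add: Cset_def green_chir_uncoupled_tendsto_iff)
qed

lemma Cset_dell_chil_iff:
  assumes "finite_dim TYPE('s)" "chir \<noteq> 0" "delr \<noteq> 0" "nu \<noteq> 0" "E \<notin> Nset HS dell delr"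
  shows "E \<in> Cset (Hpert Hl HS Hr chil chir dell delr 0 nu) (dom0 Dl Dr) (emb_S dell) (emb_l chil) \<longleftrightarrow>
    ((\<lambda>\<epsilon>. cmod (G 0 (emb_l chil) (emb_l chil) (Complex E \<epsilon>))) \<longlongrightarrow> 0) (at_right 0) \<and>
    ((\<lambda>\<epsilon>. G 0 (emb_r chir) (emb_r chir) (Complex E \<epsilon>)) \<longlongrightarrow>
      1 / (of_real (nu\<^sup>2) * GS delr delr (of_real E))) (at_right 0)"
proof -
  note N = not_in_Nset[OF assms(5)]
  note S_lim = S.green_tendsto_real[OF assms(1) N(1)]
  have "filterlim (\<lambda>\<epsilon>. cmod (G nu (emb_S dell) (emb_S dell) (Complex E \<epsilon>))) at_top (at_right 0) \<longleftrightarrow>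
      ((\<lambda>\<epsilon>. Gr (Complex E \<epsilon>)) \<longlongrightarrow> 1 / (of_real (nu\<^sup>2) * GS delr delr (of_real E))) (at_right 0)"
    by (rule moebius_tendsto_infinity_iff[OF eventually_green_dell[OF assms(2,3)] S_lim S_lim
          green_S_det_tendsto[OF assms(1) N(1)]])
      (use assms(4) N in simp_all)
  moreover have "((\<lambda>\<epsilon>. G nu (emb_l chil) (emb_l chil) (Complex E \<epsilon>)) \<longlongrightarrow> 0) (at_right 0)
      \<longleftrightarrow> ((\<lambda>\<epsilon>. cmod (G 0 (emb_l chil) (emb_l chil) (Complex E \<epsilon>))) \<longlongrightarrow> 0) (at_right 0)"
    unfolding tendsto_norm_zero_iff by (rule tendsto_cong[OF green_chil_coupling_invariant])
  ultimately show ?thesis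
    by (auto simp: Cset_def green_chir_uncoupled_tendsto_iff)
qed

end

theorem lemma2p3:
  fixes Hl :: "'l::chilbert \<Rightarrow> 'l" and Dl :: "'l set"
    and Hr :: "'r::chilbert \<Rightarrow> 'r" and Dr :: "'r set"
    and HS :: "'s::chilbert \<Rightarrow> 's"
    and chil :: 'l and chir :: 'r and dell :: 's and delr :: 's
  defines "G \<equiv> (\<lambda>nu::real. green (dom0 Dl Dr) (Hpert Hl HS Hr chil chir dell delr 0 nu))"
    and "GS \<equiv> (\<lambda>\<phi> \<psi> (E::real). green UNIV HS \<phi> \<psi> (complex_of_real E))"
    and "N \<equiv> Nset HS dell delr"
    and "C \<equiv> (\<lambda>nu::real. Cset (Hpert Hl HS Hr chil chir dell delr 0 nu) (dom0 Dl Dr))"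
    and "XL \<equiv> (emb_l chil :: 'l \<times> 's \<times> 'r)"
    and "XR \<equiv> (emb_r chir :: 'l \<times> 's \<times> 'r)"
    and "DL \<equiv> (emb_S dell :: 'l \<times> 's \<times> 'r)"
    and "DR \<equiv> (emb_S delr :: 'l \<times> 's \<times> 'r)"
  assumes fin: "finite_dim TYPE('s)"
    and sa_l: "self_adjoint_op Dl Hl"
    and sa_S: "self_adjoint_op UNIV HS"
    and sa_r: "self_adjoint_op Dr Hr"
    and nz: "chil \<noteq> 0" "chir \<noteq> 0" "dell \<noteq> 0" "delr \<noteq> 0"
    and nontriv: "\<exists>E. E \<notin> real_spectrum UNIV HS \<and> GS dell delr E \<noteq> 0"
    and cyc: "cyclic_family (dom0 Dl Dr) (H0 Hl HS Hr) {XL, XR, DL, DR}"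
  shows "(C 0 XL DL \<subseteq> N \<and> C 0 DL XL \<subseteq> N) \<and>
         (\<forall>nu. nu \<noteq> 0 \<longrightarrow> C nu XL DL - N =
           {E. E \<notin> N \<and>
               filterlim (\<lambda>\<epsilon>. cmod (G 0 XL XL (Complex E \<epsilon>))) at_top (at_right 0) \<and>
               ((\<lambda>\<epsilon>. G 0 XR XR (Complex E \<epsilon>)) \<longlongrightarrow>
                  GS dell dell E / (complex_of_real (nu^2) * dfun HS dell delr E)) (at_right 0)}) \<and>
         (\<forall>nu. nu \<noteq> 0 \<longrightarrow> C nu DL XL - N =
           {E. E \<notin> N \<and>
               ((\<lambda>\<epsilon>. cmod (G 0 XL XL (Complex E \<epsilon>))) \<longlongrightarrow> 0) (at_right 0) \<and>
               ((\<lambda>\<epsilon>. G 0 XR XR (Complex E \<epsilon>)) \<longlongrightarrow>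
                  1 / (complex_of_real (nu^2) * GS delr delr E)) (at_right 0)})"
proof -
  interpret coupled_model Dl Hl HS Dr Hr chil chir dell delr
    using sa_l sa_S sa_r by (simp add: coupled_model_def model_def self_adjoint_def)
  show ?thesis
    unfolding G_def GS_def N_def C_def XL_def XR_def DL_def
    using Cset_uncoupled_chil_dell_subset[OF fin] Cset_uncoupled_dell_chil_subset[OF fin]
      Cset_chil_dell_iff[OF fin nz(2,4)] Cset_dell_chil_iff[OF fin nz(2,4)]
    by auto
qed

end
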